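(* Let $g(x)=\sum_{n\ge 1}\frac{2\,(4n+1)!}{(n+1)!\,(3n+2)!}\,x^n$, regarded as a formal power series. For all integers $n\ge 1$, $$\frac{[x^n]\,(g(x))^2}{[x^n]\,g(x)}=\frac{10(n-1)(n^2+14n+12)}{3(3n+5)(3n+4)(n+2)}.$$
   Context: For a formal power series $f(x)$, $[x^n]f(x)$ denotes the coefficient of $x^n$ in $f(x)$. *)

theory Defs
  imports "HOL-Computational_Algebra.Formal_Power_Series"
begin

definition g_fps :: "rat fps" where
  "g_fps = Abs_fps (\<lambda>n. if n = 0 then 0
     else 2 * fact (4*n+1) / (fact (n+1) * fact (3*n+2)))"

end

theory Submission
  imports Defs
begin

text \<open>Let c_k = 2 (4k+1)! / ((k+1)! (3k+2)!) (\<open>g_coeff\<close>), so that c_0 = 1 and g = C - 1 for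
  C = Sum c_k x^k. For n >= 1 the coefficient of x^n in g^2 is s_n - 2 c_n, where
  s_n = Sum_k c_k c_(n-k) (\<open>g_conv\<close>), so the claim amounts to the closed form
  s_n = c_n * 8 (2n+1) (4n+3) (n+5) / (3 (3n+5) (3n+4) (n+2)).

  The closed form is proved by creative telescoping. There are polynomials a_0, a_1, a_2
  (\<open>rec_coeff0\<close>, ...) and a rational certificate R (\<open>cert\<close>), as produced by Zeilberger's
  algorithm, such that the summand F(n,k) = c_k c_(n-k) satisfies
  a_0(n) F(n,k) + a_1(n) F(n+1,k) + a_2(n) F(n+2,k) = G(n,k+1) - G(n,k) with
  G(n,k) = R(k, n+1-k) F(n+1,k) (\<open>telescoping_term\<close>); divided by F(n,k), this is an identity of
  rational functions of k and n - k. Summing over k shows that s_n satisfies an inhomogeneous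
  second-order recurrence whose right-hand side collects the boundary terms. The closed form
  satisfies the same recurrence, a_2 does not vanish, and both agree for n = 0 and n = 1.\<close>

lemma linear_recurrence2_unique:
  fixes f h :: "nat \<Rightarrow> 'a::idom"
  assumes rec: "\<And>n. a n * f n + b n * f (Suc n) + c n * f (Suc (Suc n))
                   = a n * h n + b n * h (Suc n) + c n * h (Suc (Suc n))"
    and lead: "\<And>n. c n \<noteq> 0"
    and "f 0 = h 0" and "f 1 = h 1"
  shows "f n = h n"
proof -
  have "f n = h n \<and> f (Suc n) = h (Suc n)"
  proof (induction n)
    case 0
    then show ?case using \<open>f 0 = h 0\<close> \<open>f 1 = h 1\<close> by simp
  next
    case (Suc n)
    with rec[of n] have "c n * f (Suc (Suc n)) = c n * h (Suc (Suc n))" by simp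
    with lead[of n] Suc show ?case by simp
  qed
  then show ?thesis ..
qed

definition g_coeff :: "nat \<Rightarrow> rat" where
  "g_coeff k = 2 * fact (4*k+1) / (fact (k+1) * fact (3*k+2))"

definition g_num :: "rat \<Rightarrow> rat" where
  "g_num y = (4*y+2) * (4*y+3) * (4*y+4) * (4*y+5)"

definition g_den :: "rat \<Rightarrow> rat" where
  "g_den y = (y+2) * (3*y+3) * (3*y+4) * (3*y+5)"

abbreviation g_ratio :: "rat \<Rightarrow> rat" where
  "g_ratio y \<equiv> g_num y / g_den y"

lemma g_den_pos: "y \<ge> 0 \<Longrightarrow> g_den y > 0"
  unfolding g_den_def by (intro mult_pos_pos) auto

lemma g_coeff_pos: "g_coeff k > 0"
  unfolding g_coeff_def by simp

lemma g_coeff_0: "g_coeff 0 = 1"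
  unfolding g_coeff_def by (simp add: fact_numeral)

lemma g_coeff_Suc: "g_coeff (Suc k) = g_coeff k * g_ratio (of_nat k)"
proof -
  define z where "z = (of_nat k :: rat)"
  define a b c where "a = (fact (4*k+1) :: rat)" and "b = (fact (k+1) :: rat)"
    and "c = (fact (3*k+2) :: rat)"
  have fact_Suc_k: "fact (4 * Suc k + 1) = (4*z+2) * (4*z+3) * (4*z+4) * (4*z+5) * a"
    "fact (Suc k + 1) = (z+2) * b" "fact (3 * Suc k + 2) = (3*z+3) * (3*z+4) * (3*z+5) * c"
    unfolding z_def a_def b_def c_def by (simp_all add: numeral_eq_Suc algebra_simps)
  have "g_den z \<noteq> 0" "b \<noteq> 0" "c \<noteq> 0"
    using g_den_pos[of z] unfolding z_def b_def c_def by simp_all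
  then show ?thesis
    unfolding g_coeff_def fact_Suc_k a_def[symmetric] b_def[symmetric] c_def[symmetric]
      z_def[symmetric] g_num_def
    by (simp add: field_simps g_den_def)
qed

lemma g_coeff_1: "g_coeff (Suc 0) = 1"
  using g_coeff_Suc[of 0] by (simp add: g_coeff_0 g_num_def g_den_def)

lemma g_fps_eq: "g_fps = Abs_fps g_coeff - 1"
  by (rule fps_ext) (simp add: g_fps_def g_coeff_def)

definition g_conv :: "nat \<Rightarrow> rat" where
  "g_conv n = (\<Sum>k=0..n. g_coeff k * g_coeff (n - k))"

lemma fps_nth_g_fps: "n \<ge> 1 \<Longrightarrow> fps_nth g_fps n = g_coeff n"
  by (simp add: g_fps_eq)

lemma fps_nth_g_fps_square:
  assumes "n \<ge> 1"
  shows "fps_nth (g_fps ^ 2) n = g_conv n - 2 * g_coeff n"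
proof -
  have "g_fps ^ 2 = Abs_fps g_coeff * Abs_fps g_coeff - 2 * Abs_fps g_coeff + 1"
    unfolding g_fps_eq by (simp add: power2_eq_square algebra_simps)
  moreover have "fps_nth (Abs_fps g_coeff * Abs_fps g_coeff) n = g_conv n"
    by (simp add: fps_mult_nth g_conv_def)
  ultimately show ?thesis
    using assms by (simp add: numeral_fps_const)
qed

definition rec_coeff0 :: "rat \<Rightarrow> rat" where
  "rec_coeff0 n = 1024 * (n+1) * (2*n+3) * (2*n+5) * (4*n+5) * (4*n+7) * (6*n+17)"

definition rec_coeff1 :: "rat \<Rightarrow> rat" where
  "rec_coeff1 n = - 13460160 - 35352264*n - 38357160*n^2 - 22000992*n^3 - 7034976*n^4
     - 1188864*n^5 - 82944*n^6"

definition rec_coeff2 :: "rat \<Rightarrow> rat" where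
  "rec_coeff2 n = 9 * (n+4) * (3*n+7) * (3*n+8) * (3*n+10) * (3*n+11) * (6*n+11)"

definition conv_rec :: "(nat \<Rightarrow> rat) \<Rightarrow> nat \<Rightarrow> rat" where
  "conv_rec f n = rec_coeff0 (of_nat n) * f n + rec_coeff1 (of_nat n) * f (Suc n)
     + rec_coeff2 (of_nat n) * f (Suc (Suc n))"

definition conv_rec_inhom :: "nat \<Rightarrow> rat" where
  "conv_rec_inhom n = - 7560 * (2 * of_nat n + 5) * (3 * of_nat n + 7) * (3 * of_nat n + 8)
     / (4 * of_nat n + 9) * g_coeff (Suc (Suc n))"

definition cert_poly :: "rat \<Rightarrow> rat \<Rightarrow> rat" where
  "cert_poly x y = 151200 + 1035720*y + 2912700*y^2 + 4378920*y^3 + 3815700*y^4 + 1933680*y^5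
    + 529200*y^6 + 60480*y^7 + 1322640*x + 8417094*x*y + 22047038*x*y^2 + 30961838*x*y^3
    + 25268438*x*y^4 + 12018384*x*y^5 + 3092040*x*y^6 + 332640*x*y^7 + 4634190*x^2
    + 26811663*x^2*y + 63652308*x^2*y^2 + 80758663*x^2*y^3 + 59295968*x^2*y^4
    + 25228140*x^2*y^5 + 5760720*x^2*y^6 + 544320*x^2*y^7 + 8588545*x^3 + 44183344*x^3*y
    + 92330045*x^3*y^2 + 101702864*x^3*y^3 + 63568650*x^3*y^4 + 22347360*x^3*y^5
    + 4014360*x^3*y^6 + 272160*x^3*y^7 + 9335970*x^4 + 41514290*x^4*y + 73579270*x^4*y^2
    + 66728205*x^4*y^3 + 32677380*x^4*y^4 + 8183700*x^4*y^5 + 816480*x^4*y^6 + 6232310*x^5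
    + 23086816*x^5*y + 32968977*x^5*y^2 + 22746942*x^5*y^3 + 7589592*x^5*y^4 + 979776*x^5*y^5
    + 2566410*x^6 + 7596867*x^6*y + 8171622*x^6*y^2 + 3786912*x^6*y^3 + 637632*x^6*y^4
    + 606105*x^7 + 1369026*x^7*y + 1008720*x^7*y^2 + 241056*x^7*y^3 + 61830*x^8 + 97740*x^8*y
    + 38880*x^8*y^2"

definition cert :: "rat \<Rightarrow> rat \<Rightarrow> rat" where
  "cert x y = 24 * (3*y+3) * cert_poly x y / ((x+y+1) * (x+y+2) * g_den y)"

text \<open>In the following three rational identities the polynomials are abstracted to atoms, so that
  \<open>field_simps\<close> only clears denominators; the resulting equation is a multiple of the
  cleared polynomial identity, which \<open>algebra\<close> checks.\<close>

lemma cert_identity: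
  fixes x y :: rat
  assumes "x \<ge> 0" and "y \<ge> 0"
  shows "rec_coeff0 (x+y) + rec_coeff1 (x+y) * g_ratio y
      + rec_coeff2 (x+y) * g_ratio y * g_ratio (y+1)
    = g_ratio x * cert (x+1) y - g_ratio y * cert x (y+1)"
proof -
  define a0 a1 a2 where "a0 = rec_coeff0 (x+y)" and "a1 = rec_coeff1 (x+y)"
    and "a2 = rec_coeff2 (x+y)"
  define nx dx n0 d0 n1 d1 where "nx = g_num x" and "dx = g_den x" and "n0 = g_num y"
    and "d0 = g_den y" and "n1 = g_num (y+1)" and "d1 = g_den (y+1)"
  define p q where "p = cert_poly (x+1) y" and "q = cert_poly x (y+1)"
  define e where "e = (x+y+2) * (x+y+3)"
  note atoms = a0_def a1_def a2_def nx_def dx_def n0_def d0_def n1_def d1_def p_def q_def e_def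
  have nz: "e \<noteq> 0" "dx \<noteq> 0" "d0 \<noteq> 0" "d1 \<noteq> 0"
    using assms g_den_pos[of x] g_den_pos[of y] g_den_pos[of "y+1"] unfolding atoms by auto
  have cert_eq: "cert (x+1) y = 24 * (3*y+3) * p / (e * d0)"
    "cert x (y+1) = 24 * (3*y+6) * q / (e * d1)"
    unfolding cert_def atoms by (simp_all add: algebra_simps)
  have cleared: "e * dx * (a0 * d0 * d1 + a1 * n0 * d1 + a2 * n0 * n1)
      = 24 * (3*y+3) * nx * d1 * p - 24 * (3*y+6) * dx * n0 * q"
    unfolding atoms rec_coeff0_def rec_coeff1_def rec_coeff2_def g_num_def g_den_def cert_poly_def
    by algebra
  show ?thesis
    unfolding cert_eq atoms[symmetric] using nz by (simp add: field_simps) (use cleared in algebra)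
qed

lemma cert_boundary_identity:
  fixes z :: rat
  assumes "z \<ge> 0"
  shows "cert (z+1) 0 - cert 0 (z+1) + rec_coeff1 z + rec_coeff2 z + rec_coeff2 z * g_ratio (z+1)
    = - 7560 * (2*z+5) * (3*z+7) * (3*z+8) / (4*z+9) * g_ratio (z+1)"
proof -
  define a1 a2 where "a1 = rec_coeff1 z" and "a2 = rec_coeff2 z"
  define n1 d1 where "n1 = g_num (z+1)" and "d1 = g_den (z+1)"
  define p q where "p = cert_poly (z+1) 0" and "q = cert_poly 0 (z+1)"
  define e r where "e = (z+2) * (z+3)" and "r = 4*z+9"
  note atoms = a1_def a2_def n1_def d1_def p_def q_def e_def r_def
  have nz: "e \<noteq> 0" "d1 \<noteq> 0" "r \<noteq> 0"
    using assms g_den_pos[of "z+1"] unfolding atoms by auto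
  have cert_eq: "cert (z+1) 0 = 72 * p / (120 * e)" "cert 0 (z+1) = 24 * (3*z+6) * q / (e * d1)"
    unfolding cert_def atoms by (simp_all add: g_den_def algebra_simps)
  have cleared: "r * (3 * p * d1 - 120 * (3*z+6) * q + 5 * e * d1 * (a1 + a2) + 5 * e * a2 * n1)
      = - 37800 * (2*z+5) * (3*z+7) * (3*z+8) * e * n1"
    unfolding atoms rec_coeff1_def rec_coeff2_def g_num_def g_den_def cert_poly_def
    \<comment> \<open>\<open>algebra\<close> fails on literal factors 0, which evaluating \<open>cert_poly\<close> at 0 produces\<close>
    by (simp only: power_zero_numeral mult_zero_left mult_zero_right add_0_right) algebra
  show ?thesis
    unfolding cert_eq atoms[symmetric] using nz by (simp add: field_simps) (use cleared in algebra)
qed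

definition conv_num :: "rat \<Rightarrow> rat" where
  "conv_num z = 8 * (2*z+1) * (4*z+3) * (z+5)"

definition conv_den :: "rat \<Rightarrow> rat" where
  "conv_den z = 3 * (3*z+5) * (3*z+4) * (z+2)"

abbreviation conv_ratio :: "rat \<Rightarrow> rat" where
  "conv_ratio z \<equiv> conv_num z / conv_den z"

lemma conv_den_pos: "z \<ge> 0 \<Longrightarrow> conv_den z > 0"
  unfolding conv_den_def by (intro mult_pos_pos) auto

lemma conv_ratio_recurrence:
  fixes z :: rat
  assumes "z \<ge> 0"
  shows "rec_coeff0 z * conv_ratio z + rec_coeff1 z * g_ratio z * conv_ratio (z+1)
      + rec_coeff2 z * g_ratio z * g_ratio (z+1) * conv_ratio (z+2)
    = - 7560 * (2*z+5) * (3*z+7) * (3*z+8) / (4*z+9) * (g_ratio z * g_ratio (z+1))"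
proof -
  define a0 a1 a2 where "a0 = rec_coeff0 z" and "a1 = rec_coeff1 z" and "a2 = rec_coeff2 z"
  define p0 p1 p2 where "p0 = conv_num z" and "p1 = conv_num (z+1)" and "p2 = conv_num (z+2)"
  define q0 q1 q2 where "q0 = conv_den z" and "q1 = conv_den (z+1)" and "q2 = conv_den (z+2)"
  define n0 n1 d0 d1 where "n0 = g_num z" and "n1 = g_num (z+1)" and "d0 = g_den z"
    and "d1 = g_den (z+1)"
  define r where "r = 4*z+9"
  note atoms = a0_def a1_def a2_def p0_def p1_def p2_def q0_def q1_def q2_def
    n0_def n1_def d0_def d1_def r_def
  have nz: "q0 \<noteq> 0" "q1 \<noteq> 0" "q2 \<noteq> 0" "d0 \<noteq> 0" "d1 \<noteq> 0" "r \<noteq> 0"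
    using assms conv_den_pos[of z] conv_den_pos[of "z+1"] conv_den_pos[of "z+2"]
      g_den_pos[of z] g_den_pos[of "z+1"]
    unfolding atoms by auto
  have cleared: "r * (a0 * p0 * d0 * d1 * q1 * q2 + a1 * n0 * p1 * d1 * q0 * q2
        + a2 * n0 * n1 * p2 * q0 * q1)
      = - 7560 * (2*z+5) * (3*z+7) * (3*z+8) * n0 * n1 * q0 * q1 * q2"
    unfolding atoms rec_coeff0_def rec_coeff1_def rec_coeff2_def conv_num_def conv_den_def
      g_num_def g_den_def
    by algebra
  show ?thesis
    unfolding atoms[symmetric] using nz by (simp add: field_simps) (use cleared in algebra)
qed

definition telescoping_term :: "nat \<Rightarrow> nat \<Rightarrow> rat" where
  "telescoping_term n k = g_coeff k * g_coeff (Suc n - k) * cert (of_nat k) (of_nat (Suc n - k))"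

lemma summand_telescopes:
  assumes "k \<le> n"
  shows "rec_coeff0 (of_nat n) * (g_coeff k * g_coeff (n - k))
      + rec_coeff1 (of_nat n) * (g_coeff k * g_coeff (Suc n - k))
      + rec_coeff2 (of_nat n) * (g_coeff k * g_coeff (Suc (Suc n) - k))
    = telescoping_term n (Suc k) - telescoping_term n k"
proof -
  obtain m where n: "n = k + m" using assms le_Suc_ex by blast
  define x y where "x = (of_nat k :: rat)" and "y = (of_nat m :: rat)"
  have "x \<ge> 0" "y \<ge> 0" unfolding x_def y_def by simp_all
  have shift: "g_coeff (Suc k) = g_coeff k * g_ratio x"
    "g_coeff (Suc m) = g_coeff m * g_ratio y"
    "g_coeff (Suc (Suc m)) = g_coeff m * g_ratio y * g_ratio (y+1)"
    unfolding x_def y_def by (simp_all add: g_coeff_Suc add.commute)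
  have idx: "n - k = m" "Suc n - k = Suc m" "Suc (Suc n) - k = Suc (Suc m)" "Suc n - Suc k = m"
    "(of_nat n :: rat) = x + y" "(of_nat (Suc k) :: rat) = x + 1" "(of_nat (Suc m) :: rat) = y + 1"
    unfolding n x_def y_def by simp_all
  have "telescoping_term n (Suc k) - telescoping_term n k
      = g_coeff k * g_coeff m * (g_ratio x * cert (x+1) y - g_ratio y * cert x (y+1))"
    unfolding telescoping_term_def idx shift x_def[symmetric] y_def[symmetric]
    by (simp add: algebra_simps)
  also have "\<dots> = g_coeff k * g_coeff m * (rec_coeff0 (x+y) + rec_coeff1 (x+y) * g_ratio y
      + rec_coeff2 (x+y) * g_ratio y * g_ratio (y+1))"
    using cert_identity[OF \<open>x \<ge> 0\<close> \<open>y \<ge> 0\<close>] by simp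
  finally show ?thesis
    unfolding idx shift by (simp add: algebra_simps)
qed

lemma conv_rec_g_conv: "conv_rec g_conv n = conv_rec_inhom n"
proof -
  define z where "z = (of_nat n :: rat)"
  define c where "c = g_coeff (Suc n)"
  have "z \<ge> 0" unfolding z_def by simp
  have "(\<Sum>k=0..n. rec_coeff0 z * (g_coeff k * g_coeff (n - k))
      + rec_coeff1 z * (g_coeff k * g_coeff (Suc n - k))
      + rec_coeff2 z * (g_coeff k * g_coeff (Suc (Suc n) - k)))
    = telescoping_term n (Suc n) - telescoping_term n 0"
    unfolding z_def using summand_telescopes sum_Suc_diff[of 0 n "telescoping_term n"] by simp
  moreover have "g_conv (Suc n) = (\<Sum>k=0..n. g_coeff k * g_coeff (Suc n - k)) + c"
    unfolding g_conv_def c_def by (simp add: g_coeff_0)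
  moreover have "g_conv (Suc (Suc n)) = (\<Sum>k=0..n. g_coeff k * g_coeff (Suc (Suc n) - k))
      + c + g_coeff (Suc (Suc n))"
    unfolding g_conv_def c_def by (simp add: Suc_diff_le g_coeff_0 g_coeff_1)
  ultimately have "conv_rec g_conv n = telescoping_term n (Suc n) - telescoping_term n 0
      + rec_coeff1 z * c + rec_coeff2 z * (c + g_coeff (Suc (Suc n)))"
    unfolding conv_rec_def z_def[symmetric]
    by (simp add: g_conv_def sum.distrib sum_distrib_left g_coeff_0 g_coeff_1 algebra_simps)
  also have "\<dots> = c * (cert (z+1) 0 - cert 0 (z+1) + rec_coeff1 z + rec_coeff2 z
      + rec_coeff2 z * g_ratio (z+1))"
    unfolding telescoping_term_def c_def z_def using g_coeff_Suc[of "Suc n"]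
    by (simp add: g_coeff_0 algebra_simps)
  also have "\<dots> = - 7560 * (2*z+5) * (3*z+7) * (3*z+8) / (4*z+9) * (c * g_ratio (z+1))"
    unfolding cert_boundary_identity[OF \<open>z \<ge> 0\<close>] by simp
  also have "\<dots> = conv_rec_inhom n"
    unfolding conv_rec_inhom_def c_def z_def using g_coeff_Suc[of "Suc n"]
    by (simp add: add.commute)
  finally show ?thesis .
qed

lemma conv_rec_closed_form:
  "conv_rec (\<lambda>n. g_coeff n * conv_ratio (of_nat n)) n = conv_rec_inhom n"
proof -
  define z where "z = (of_nat n :: rat)"
  have "z \<ge> 0" unfolding z_def by simp
  have shift: "g_coeff (Suc n) = g_coeff n * g_ratio z"
    "g_coeff (Suc (Suc n)) = g_coeff n * g_ratio z * g_ratio (z+1)"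
    unfolding z_def by (simp_all add: g_coeff_Suc add.commute)
  have "conv_rec (\<lambda>n. g_coeff n * conv_ratio (of_nat n)) n
      = g_coeff n * (rec_coeff0 z * conv_ratio z + rec_coeff1 z * g_ratio z * conv_ratio (z+1)
          + rec_coeff2 z * g_ratio z * g_ratio (z+1) * conv_ratio (z+2))"
    unfolding conv_rec_def shift z_def by (simp add: algebra_simps)
  also have "\<dots> = - 7560 * (2*z+5) * (3*z+7) * (3*z+8) / (4*z+9)
      * (g_coeff n * g_ratio z * g_ratio (z+1))"
    unfolding conv_ratio_recurrence[OF \<open>z \<ge> 0\<close>] by simp
  also have "\<dots> = conv_rec_inhom n"
    unfolding conv_rec_inhom_def shift z_def ..
  finally show ?thesis .
qed

lemma g_conv_closed_form: "g_conv n = g_coeff n * conv_ratio (of_nat n)"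
proof (rule linear_recurrence2_unique)
  show "rec_coeff2 (of_nat n) \<noteq> 0" for n
    unfolding rec_coeff2_def by simp
  show "rec_coeff0 (of_nat n) * g_conv n + rec_coeff1 (of_nat n) * g_conv (Suc n)
      + rec_coeff2 (of_nat n) * g_conv (Suc (Suc n))
    = rec_coeff0 (of_nat n) * (g_coeff n * conv_ratio (of_nat n))
      + rec_coeff1 (of_nat n) * (g_coeff (Suc n) * conv_ratio (of_nat (Suc n)))
      + rec_coeff2 (of_nat n) * (g_coeff (Suc (Suc n)) * conv_ratio (of_nat (Suc (Suc n))))" for n
    using conv_rec_g_conv[of n] conv_rec_closed_form[of n] unfolding conv_rec_def by simp
  show "g_conv 0 = g_coeff 0 * conv_ratio (of_nat 0)"
    by (simp add: g_conv_def g_coeff_0 conv_num_def conv_den_def)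
  show "g_conv 1 = g_coeff 1 * conv_ratio (of_nat 1)"
    by (simp add: g_conv_def g_coeff_0 g_coeff_1 conv_num_def conv_den_def)
qed

lemma conv_ratio_minus_2:
  fixes z :: rat
  assumes "z \<ge> 0"
  shows "conv_ratio z - 2 = 10 * (z - 1) * (z^2 + 14*z + 12) / (3 * (3*z+5) * (3*z+4) * (z+2))"
proof -
  have "conv_den z \<noteq> 0" using conv_den_pos[OF assms] by simp
  then show ?thesis
    unfolding conv_num_def by (simp add: field_simps conv_den_def power2_eq_square)
qed

theorem mainTheorem2:
  fixes n :: nat
  assumes "n \<ge> 1"
  shows "fps_nth (g_fps ^ 2) n / fps_nth g_fps n =
    (10 * (of_nat n - 1) * (of_nat n ^ 2 + 14 * of_nat n + 12)) /
    (3 * (3 * of_nat n + 5) * (3 * of_nat n + 4) * (of_nat n + 2) :: rat)"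
proof -
  have "g_coeff n \<noteq> 0"
    using g_coeff_pos[of n] by simp
  then have "fps_nth (g_fps ^ 2) n / fps_nth g_fps n = conv_ratio (of_nat n) - 2"
    using assms by (simp add: fps_nth_g_fps fps_nth_g_fps_square g_conv_closed_form field_simps)
  then show ?thesis
    using conv_ratio_minus_2[of "of_nat n"] by simp
qed

end
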